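(* Let $\mathcal{B}=\{(1,1,2),(1,2,2),(2,1,1)\}$, let $X^{\mathcal{B}}$ be the corresponding $S_2$-SFT and $F$ its SNRE, which is $a_n=a_{n-1}b_{n-1}+b_{n-1}^2$, $b_n=a_{n-1}^2$, $a_1=2$, $b_1=1$. Then $F$ is of the oscillating type, and $$h(X^{\mathcal{B}})=\frac14\lim_{n\to\infty}\Big(\alpha_1+\sum_{j=1}^{n}2^{-2j}\ln r^{(a)}_{2j-1}\Big),$$ where $\alpha_1=\ln a_1$ and $r^{(a)}_m=1+\frac{b_m}{a_m}+\big(\frac{b_m}{a_m}\big)^2$.
   Context: $S_2$ is the free semigroup on two generators, identified with finite words over $\{1,2\}$ (root $\epsilon$); alphabet $\{1,2\}$. For a basic set $\mathcal{B}\subseteq\{1,2\}^3$ of admissible 2-blocks $(i,i_1,i_2)$, $a_n$ (resp. $b_n$) is the number of maps $u$ from words of length $\le n$ to $\{1,2\}$ with $(u(w),u(w1),u(w2))\in\mathcal{B}$ for all words $w$ of length $\le n-1$ and $u(\epsilon)=1$ (resp. $2$); $|B_n(X^{\mathcal{B}})|=a_n+b_n$. The entropy is $h(X^{\mathcal{B}})=\limsup_{n}\frac{\ln(a_n+b_n)}{2^{n+1}-1}$, where $2^{n+1}-1$ is the number of words of length $\le n$; this limsup is known to be a limit. The SNRE is of oscillating type if there are two infinite subsequences $(n^{(a)}_m)$ and $(n^{(b)}_m)$ of $\mathbb{N}$ such that $a_n\ge b_n$ for $n$ in the first and $a_n<b_n$ for $n$ in the second. *)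

theory Defs
  imports "HOL-Analysis.Analysis" "HOL-Library.FuncSet"
begin

text \<open>Words over the alphabet {1,2} (elements of the free semigroup S_2, root = empty word)
  of length at most n.  The word w followed by letter i is w @ [i].\<close>
definition words_le :: "nat \<Rightarrow> nat list set" where
  "words_le n = {w. set w \<subseteq> {1,2} \<and> length w \<le> n}"

definition admissible :: "(nat \<times> nat \<times> nat) set \<Rightarrow> nat \<Rightarrow> (nat list \<Rightarrow> nat) \<Rightarrow> bool" where
  "admissible B n u \<longleftrightarrow>
     (\<forall>w. set w \<subseteq> {1,2} \<and> length w < n \<longrightarrow> (u w, u (w @ [1]), u (w @ [2])) \<in> B)"

definition cnt :: "(nat \<times> nat \<times> nat) set \<Rightarrow> nat \<Rightarrow> nat \<Rightarrow> nat" where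
  "cnt B c n = card {u \<in> words_le n \<rightarrow>\<^sub>E {1,2}. admissible B n u \<and> u [] = c}"

definition seq_a :: "(nat \<times> nat \<times> nat) set \<Rightarrow> nat \<Rightarrow> nat" where
  "seq_a B n = cnt B 1 n"

definition seq_b :: "(nat \<times> nat \<times> nat) set \<Rightarrow> nat \<Rightarrow> nat" where
  "seq_b B n = cnt B 2 n"

definition entropy :: "(nat \<times> nat \<times> nat) set \<Rightarrow> ereal" where
  "entropy B = limsup (\<lambda>n. ereal (ln (real (seq_a B n + seq_b B n)) / (2 ^ (n + 1) - 1)))"

definition oscillating :: "(nat \<Rightarrow> nat) \<Rightarrow> (nat \<Rightarrow> nat) \<Rightarrow> bool" where
  "oscillating a b \<longleftrightarrow> infinite {n. a n \<ge> b n} \<and> infinite {n. a n < b n}"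

definition Bex5 :: "(nat \<times> nat \<times> nat) set" where
  "Bex5 = {(1,1,2), (1,2,2), (2,1,1)}"

end

theory Submission
  imports Defs "HOL-Real_Asymp.Real_Asymp"
begin

text \<open>
  An admissible labelling of depth n+1 is its root label together with the two admissible
  labellings of depth n below the letters 1 and 2, whose root labels must complete a block of B.
  Counting such pairs gives the SNRE a(n+1) = (a(n) + b(n)) b(n), b(n+1) = a(n)^2 with
  a(0) = b(0) = 1.

  The ratio x = b/a evolves by x |-> 1/(x(1+x)), which maps [0,1/2] into [4/3,oo) and back,
  so a(n) >= b(n) for odd n and a(n) < b(n) for even n. Two steps of the recurrence give
  a(n+2) = a(n)^4 r(n), hence ln a(2k+1) = 4^k S(k) for the partial sums S(k) of the statement.
  These increase and are bounded because 0 <= ln r(2k+1) <= 1, so they converge to some L, and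
  ln (a(n+1) + b(n+1)) differs from 2^n S(n div 2) by at most 1, which makes the entropy
  quotient tend to L/4.
\<close>

definition labellings :: "(nat \<times> nat \<times> nat) set \<Rightarrow> nat \<Rightarrow> (nat list \<Rightarrow> nat) set" where
  "labellings B n = {u \<in> words_le n \<rightarrow>\<^sub>E {1,2}. admissible B n u}"

definition subtree :: "nat \<Rightarrow> nat \<Rightarrow> (nat list \<Rightarrow> nat) \<Rightarrow> nat list \<Rightarrow> nat" where
  "subtree i n u = restrict (\<lambda>w. u (i # w)) (words_le n)"

definition graft :: "nat \<Rightarrow> nat \<Rightarrow> (nat list \<Rightarrow> nat) \<Rightarrow> (nat list \<Rightarrow> nat) \<Rightarrow> nat list \<Rightarrow> nat" where
  "graft c n v1 v2 =
     restrict (\<lambda>w. case w of [] \<Rightarrow> c | i # w' \<Rightarrow> if i = 1 then v1 w' else v2 w') (words_le (Suc n))"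

lemma Nil_in_words_le [simp]: "[] \<in> words_le n"
  by (simp add: words_le_def)

lemma Cons_in_words_le_Suc [simp]: "i # w \<in> words_le (Suc n) \<longleftrightarrow> i \<in> {1,2} \<and> w \<in> words_le n"
  by (auto simp: words_le_def)

lemma subtree_Nil [simp]: "subtree i n u [] = u [i]"
  by (simp add: subtree_def)

lemma finite_words_le: "finite (words_le n)"
  unfolding words_le_def by (rule finite_lists_length_le) auto

lemma finite_labellings: "finite (labellings B n)"
  by (rule finite_subset[of _ "words_le n \<rightarrow>\<^sub>E {1,2}"])
    (auto simp: labellings_def intro!: finite_PiE finite_words_le)

lemma cnt_eq_card_labellings: "cnt B c n = card {u \<in> labellings B n. u [] = c}"
  by (simp add: cnt_def labellings_def conj_assoc)

lemma labellings_range: "u \<in> labellings B n \<Longrightarrow> w \<in> words_le n \<Longrightarrow> u w \<in> {1,2}"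
  by (auto simp: labellings_def dest: PiE_mem)

lemma labellings_root_block: "u \<in> labellings B (Suc n) \<Longrightarrow> (u [], u [1], u [2]) \<in> B"
  by (auto simp: labellings_def admissible_def dest: spec[of _ "[]"])

lemma subtree_in_labellings:
  assumes u: "u \<in> labellings B (Suc n)" and i: "i \<in> {1,2}"
  shows "subtree i n u \<in> labellings B n"
proof -
  have "subtree i n u w \<in> {1,2}" if "w \<in> words_le n" for w
    using u i that by (auto simp: labellings_def subtree_def)
  moreover have "(u (i # w), u (i # w @ [1]), u (i # w @ [2])) \<in> B"
    if "set w \<subseteq> {1,2}" "length w < n" for w
  proof -
    have "set (i # w) \<subseteq> {1,2} \<and> length (i # w) < Suc n"
      using i that by auto
    then have "(u (i # w), u ((i # w) @ [1]), u ((i # w) @ [2])) \<in> B"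
      using u unfolding labellings_def admissible_def by blast
    then show ?thesis
      by simp
  qed
  ultimately show ?thesis
    by (auto simp: labellings_def admissible_def subtree_def words_le_def)
qed

lemma graft_in_labellings:
  assumes "v1 \<in> labellings B n" "v2 \<in> labellings B n" "c \<in> {1,2}" "(c, v1 [], v2 []) \<in> B"
  shows "graft c n v1 v2 \<in> labellings B (Suc n)"
  unfolding labellings_def admissible_def
proof (intro CollectI conjI allI impI)
  show "graft c n v1 v2 \<in> words_le (Suc n) \<rightarrow>\<^sub>E {1,2}"
    using assms labellings_range[of v1 B n] labellings_range[of v2 B n]
    by (auto simp: graft_def split: list.split)
next
  fix w :: "nat list" assume w: "set w \<subseteq> {1,2} \<and> length w < Suc n"
  then have "w @ [1] \<in> words_le (Suc n)" "w @ [2] \<in> words_le (Suc n)" "w \<in> words_le (Suc n)"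
    by (auto simp: words_le_def)
  with w assms show "(graft c n v1 v2 w, graft c n v1 v2 (w @ [1]), graft c n v1 v2 (w @ [2])) \<in> B"
    by (cases w) (auto simp: graft_def labellings_def admissible_def)
qed

lemma graft_subtree:
  assumes "u \<in> labellings B (Suc n)"
  shows "graft (u []) n (subtree 1 n u) (subtree 2 n u) = u"
proof
  fix w show "graft (u []) n (subtree 1 n u) (subtree 2 n u) w = u w"
    using assms by (cases w) (auto simp: graft_def subtree_def labellings_def PiE_def extensional_def)
qed

lemma subtree_graft:
  assumes "v1 \<in> labellings B n" "v2 \<in> labellings B n" "i \<in> {1,2}"
  shows "subtree i n (graft c n v1 v2) = (if i = 1 then v1 else v2)"
  using assms by (auto simp: subtree_def graft_def labellings_def PiE_def extensional_def)

lemma graft_Nil [simp]: "graft c n v1 v2 [] = c"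
  by (simp add: graft_def)

lemma bij_betw_subtrees:
  assumes "c \<in> {1,2}"
  shows "bij_betw (\<lambda>u. (subtree 1 n u, subtree 2 n u)) {u \<in> labellings B (Suc n). u [] = c}
           {p \<in> labellings B n \<times> labellings B n. (c, fst p [], snd p []) \<in> B}"
  by (rule bij_betw_byWitness[where f' = "\<lambda>p. graft c n (fst p) (snd p)"])
    \<comment> \<open>passed by \<open>use\<close> so that, as in the goal, the letter 1 is simplified to \<open>Suc 0\<close>\<close>
    (use graft_subtree labellings_root_block in \<open>auto simp: subtree_graft subtree_in_labellings
      intro: graft_in_labellings[OF _ _ assms]\<close>)

lemma cnt_Suc:
  assumes "c \<in> {1,2}"
  shows "cnt B c (Suc n) = (\<Sum>(i,j) \<in> {(i,j). (c,i,j) \<in> B} \<inter> {1,2} \<times> {1,2}. cnt B i n * cnt B j n)"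
proof -
  let ?P = "{(i,j). (c,i,j) \<in> B} \<inter> {1,2} \<times> {1,2}"
  have "{p \<in> labellings B n \<times> labellings B n. (c, fst p [], snd p []) \<in> B}
          = (\<Union>(i,j) \<in> ?P. {u \<in> labellings B n. u [] = i} \<times> {u \<in> labellings B n. u [] = j})"
    (is "?L = ?R")
  proof
    show "?L \<subseteq> ?R"
    proof
      fix p assume "p \<in> ?L"
      then obtain v1 v2 where p: "p = (v1, v2)" and v: "v1 \<in> labellings B n" "v2 \<in> labellings B n"
        and "(c, v1 [], v2 []) \<in> B" by auto
      then have "(v1 [], v2 []) \<in> ?P"
        using labellings_range[OF v(1), of "[]"] labellings_range[OF v(2), of "[]"] by auto
      then show "p \<in> ?R" using p v by blast
    qed
  qed auto
  moreover have "card (\<Union>(i,j) \<in> ?P. {u \<in> labellings B n. u [] = i} \<times> {u \<in> labellings B n. u [] = j})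
                   = (\<Sum>(i,j) \<in> ?P. cnt B i n * cnt B j n)"
    by (subst card_UN_disjoint)
      (auto simp: finite_labellings cnt_eq_card_labellings card_cartesian_product
        intro!: sum.cong split: prod.splits)
  ultimately show ?thesis
    using bij_betw_same_card[OF bij_betw_subtrees[OF assms]] by (simp add: cnt_eq_card_labellings)
qed

lemma cnt_0: "c \<in> {1,2} \<Longrightarrow> cnt B c 0 = 1"
proof -
  assume "c \<in> {1,2}"
  then have "{u \<in> labellings B 0. u [] = c} = {restrict (\<lambda>_. c) {[]}}"
    by (auto simp: labellings_def admissible_def words_le_def PiE_def extensional_def restrict_def)
  then show ?thesis by (simp add: cnt_eq_card_labellings)
qed

lemma seq_0: "seq_a B 0 = 1" "seq_b B 0 = 1"
  by (simp_all add: seq_a_def seq_b_def cnt_0)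

lemma powr_minus_two_mult: "2 powr (- 2 * real j) = (1/4 :: real) ^ j"
  by (simp add: powr_minus powr_realpow power_mult power_one_over inverse_eq_divide flip: powr_powr)

lemma tendsto_div_two_pow:
  fixes h S :: "nat \<Rightarrow> real"
  assumes S: "S \<longlonglongrightarrow> L" and h: "\<And>n. \<bar>h (Suc n) - 2 ^ n * S (n div 2)\<bar> \<le> C"
  shows "(\<lambda>n. h n / (2 ^ (n + 1) - 1)) \<longlonglongrightarrow> L / 4"
proof -
  have "(\<lambda>n. S (n div 2)) \<longlonglongrightarrow> L"
    using S filterlim_at_top_div_const_nat[of 2] by (rule filterlim_compose) simp
  then have main: "(\<lambda>n. 2 ^ n / (4 * 2 ^ n - 1) * S (n div 2)) \<longlonglongrightarrow> 1/4 * L"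
    by (intro tendsto_mult) real_asymp+
  have lim0: "(\<lambda>n::nat. 1 / (4 * 2 ^ n - 1) :: real) \<longlonglongrightarrow> 0"
    by real_asymp
  have bound: "norm ((h (Suc n) - 2 ^ n * S (n div 2)) / (4 * 2 ^ n - 1))
                   \<le> norm (1 / (4 * 2 ^ n - 1) :: real) * C" for n
  proof -
    have "\<bar>h (Suc n) - 2 ^ n * S (n div 2)\<bar> / \<bar>4 * 2 ^ n - 1\<bar> \<le> C / \<bar>4 * 2 ^ n - 1\<bar>"
      by (rule divide_right_mono[OF h]) simp
    then show ?thesis
      by (simp add: abs_divide)
  qed
  have error: "(\<lambda>n. (h (Suc n) - 2 ^ n * S (n div 2)) / (4 * 2 ^ n - 1)) \<longlonglongrightarrow> 0"
    by (rule tendsto_0_le[OF lim0 always_eventually]) (rule allI, rule bound)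
  have "(\<lambda>n. h (Suc n) / (2 ^ (Suc n + 1) - 1)) \<longlonglongrightarrow> L / 4"
    using tendsto_add[OF main error] by (simp add: diff_divide_distrib mult.assoc)
  then show ?thesis
    by (rule LIMSEQ_imp_Suc)
qed

lemma seq_Bex5_Suc:
  "seq_a Bex5 (Suc n) = (seq_a Bex5 n + seq_b Bex5 n) * seq_b Bex5 n"
  "seq_b Bex5 (Suc n) = seq_a Bex5 n ^ 2"
proof -
  have "{(i,j). (1,i,j) \<in> Bex5} \<inter> {1,2} \<times> {1,2} = {(1,2), (2,2)}"
       "{(i,j). (2,i,j) \<in> Bex5} \<inter> {1,2} \<times> {1,2} = {(1,1)}"
    by (auto simp: Bex5_def)
  then show "seq_a Bex5 (Suc n) = (seq_a Bex5 n + seq_b Bex5 n) * seq_b Bex5 n"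
            "seq_b Bex5 (Suc n) = seq_a Bex5 n ^ 2"
    by (simp_all add: seq_a_def seq_b_def cnt_Suc algebra_simps power2_eq_square)
qed

lemma ratio_step_small:
  fixes x y :: nat
  assumes "2 * y \<le> x"
  shows "4 * ((x + y) * y) \<le> 3 * x ^ 2"
proof -
  have "4 * ((x + y) * y) = (2 * y) * (2 * x) + (2 * y) * (2 * y)"
    by (simp add: algebra_simps)
  also have "\<dots> \<le> x * (2 * x) + x * x"
    using assms by (intro add_mono mult_mono) auto
  finally show ?thesis
    by (simp add: power2_eq_square)
qed

lemma ratio_step_large:
  fixes x y :: nat
  assumes "4 * x \<le> 3 * y"
  shows "2 * x ^ 2 \<le> (x + y) * y"
proof -
  have "x \<le> y" using assms by linarith
  then have "x * x + x * x \<le> x * y + y * y"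
    by (intro add_mono mult_mono) auto
  then show ?thesis
    by (simp add: power2_eq_square algebra_simps)
qed

locale snre_Bex5 =
  fixes a b :: "nat \<Rightarrow> nat"
  assumes a_0: "a 0 = 1" and b_0: "b 0 = 1"
    and a_Suc: "a (Suc n) = (a n + b n) * b n"
    and b_Suc: "b (Suc n) = a n ^ 2"
begin

lemma a_pos: "a n > 0"
proof -
  have "a n > 0 \<and> b n > 0"
    by (induction n) (auto simp: a_0 b_0 a_Suc b_Suc)
  then show ?thesis ..
qed

lemma ratio_alternates: "2 * b (2*k+1) \<le> a (2*k+1) \<and> 4 * a (2*k+2) \<le> 3 * b (2*k+2)"
proof (induction k)
  case 0
  show ?case by (simp add: numeral_2_eq_2 a_0 b_0 a_Suc b_Suc)
next
  case (Suc k)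
  then have "2 * b (2*k+3) \<le> a (2*k+3)"
    using ratio_step_large by (simp add: numeral_3_eq_3 a_Suc b_Suc)
  moreover from this have "4 * a (2*k+4) \<le> 3 * b (2*k+4)"
    using ratio_step_small by (simp add: a_Suc b_Suc eval_nat_numeral)
  ultimately show ?case
    by (simp add: eval_nat_numeral)
qed

lemma oscillating: "oscillating a b"
proof -
  have "b (2*k+1) \<le> a (2*k+1)" "a (2*k+2) < b (2*k+2)" for k
    using ratio_alternates[of k] a_pos[of "2*k+2"] by linarith+
  then have "range (\<lambda>k. 2*k+1) \<subseteq> {n. a n \<ge> b n}" "range (\<lambda>k. 2*k+2) \<subseteq> {n. a n < b n}"
    by auto
  moreover have "infinite (range (\<lambda>k::nat. 2*k+1))" "infinite (range (\<lambda>k::nat. 2*k+2))"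
    by (auto intro!: range_inj_infinite simp: inj_on_def)
  ultimately show ?thesis
    unfolding oscillating_def by (meson infinite_super)
qed

definition r :: "nat \<Rightarrow> real" where
  "r m = 1 + real (b m) / real (a m) + (real (b m) / real (a m)) ^ 2"

definition S :: "nat \<Rightarrow> real" where
  "S n = ln (real (a 1)) + (\<Sum>j=1..n. 2 powr (- 2 * real j) * ln (r (2 * j - 1)))"

lemma r_ge_1: "1 \<le> r m"
  by (simp add: r_def)

lemma a_plus_b_Suc: "real (a (Suc m) + b (Suc m)) = real (a m) ^ 2 * r m"
proof -
  have "real (a (Suc m) + b (Suc m)) = real (a m) ^ 2 + real (a m) * real (b m) + real (b m) ^ 2"
    by (simp add: a_Suc b_Suc algebra_simps power2_eq_square)
  also have "\<dots> = real (a m) ^ 2 * r m"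
    using a_pos[of m] by (simp add: r_def field_simps power2_eq_square)
  finally show ?thesis .
qed

lemma a_Suc_Suc: "real (a (Suc (Suc m))) = real (a m) ^ 4 * r m"
proof -
  have "real (a (Suc (Suc m))) = real (a (Suc m) + b (Suc m)) * real (b (Suc m))"
    by (simp only: a_Suc[of "Suc m"] of_nat_mult)
  also have "\<dots> = real (a m) ^ 4 * r m"
    by (subst a_plus_b_Suc) (simp add: b_Suc eval_nat_numeral algebra_simps)
  finally show ?thesis .
qed

lemma ratio_odd_le_half: "real (b (2*k+1)) / real (a (2*k+1)) \<le> 1/2"
  using ratio_alternates[of k] a_pos[of "2*k+1"] by (simp add: field_simps)

lemma ln_r_odd_bounds: "0 \<le> ln (r (2*k+1))" "ln (r (2*k+1)) \<le> 1"
proof -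
  define x where "x = real (b (2*k+1)) / real (a (2*k+1))"
  have "0 \<le> x" "x \<le> 1/2"
    using ratio_odd_le_half[of k] by (simp_all add: x_def)
  then have "x ^ 2 \<le> 1/4"
    using power_mono[of x "1/2" 2] by (simp add: power_divide)
  moreover have "r (2*k+1) = 1 + x + x ^ 2"
    by (simp add: r_def x_def)
  ultimately have "r (2*k+1) \<le> 7/4"
    using \<open>x \<le> 1/2\<close> by linarith
  then show "ln (r (2*k+1)) \<le> 1"
    using ln_le_minus_one[of "r (2*k+1)"] r_ge_1[of "2*k+1"] by linarith
  show "0 \<le> ln (r (2*k+1))"
    using r_ge_1 by simp
qed

lemma S_Suc: "S (Suc k) = S k + ln (r (2*k+1)) / 4 ^ Suc k"
proof -
  have "2 powr (- 2 * real (Suc k)) * ln (r (2 * Suc k - 1)) = ln (r (2*k+1)) / 4 ^ Suc k"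
    by (simp only: powr_minus_two_mult) (simp add: power_one_over)
  then show ?thesis
    by (simp add: S_def)
qed

lemma ln_a_odd: "ln (real (a (2*k+1))) = 4 ^ k * S k"
proof (induction k)
  case 0
  show ?case by (simp add: S_def)
next
  case (Suc k)
  have "ln (real (a (2 * Suc k + 1))) = 4 * ln (real (a (2*k+1))) + ln (r (2*k+1))"
    using a_pos[of "2*k+1"] r_ge_1[of "2*k+1"]
    by (simp add: a_Suc_Suc[of "2*k+1", simplified] ln_mult ln_realpow)
  also have "\<dots> = 4 ^ Suc k * S (Suc k)"
    by (subst Suc.IH) (simp add: S_Suc distrib_left)
  finally show ?case .
qed

lemma S_le: "S k \<le> S 0 + (1 - 1 / 4 ^ k) / 3"
proof (induction k)
  case (Suc k)
  have "S (Suc k) \<le> S k + 1 / 4 ^ Suc k"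
    using ln_r_odd_bounds[of k] by (simp add: S_Suc divide_right_mono)
  also have "\<dots> \<le> S 0 + ((1 - 1 / 4 ^ k) / 3 + 1 / 4 ^ Suc k)"
    using Suc.IH by simp
  also have "(1 - 1 / 4 ^ k) / 3 + 1 / 4 ^ Suc k = (1 - 1 / 4 ^ Suc k) / (3 :: real)"
    by (simp add: field_simps)
  finally show ?case .
qed simp

lemma S_converges: "S \<longlonglongrightarrow> (SUP k. S k)"
proof (rule LIMSEQ_incseq_SUP)
  show "bdd_above (range S)"
  proof (rule bdd_aboveI2)
    fix k
    have "(1 - 1 / 4 ^ k) / 3 \<le> (1 :: real) / 3"
      by (simp add: divide_right_mono)
    then show "S k \<le> S 0 + 1/3"
      using S_le[of k] by linarith
  qed
  show "incseq S"
    using ln_r_odd_bounds by (intro incseq_SucI) (simp add: S_Suc)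
qed

lemma ln_a_plus_b_odd:
  "ln (real (a (2*k+1) + b (2*k+1))) = 4 ^ k * S k + ln (1 + real (b (2*k+1)) / real (a (2*k+1)))"
proof -
  have "real (a (2*k+1) + b (2*k+1)) = real (a (2*k+1)) * (1 + real (b (2*k+1)) / real (a (2*k+1)))"
    using a_pos[of "2*k+1"] by (simp add: field_simps)
  moreover have "0 < 1 + real (b (2*k+1)) / real (a (2*k+1))"
    by (simp add: add_pos_nonneg)
  ultimately have "ln (real (a (2*k+1) + b (2*k+1)))
               = ln (real (a (2*k+1))) + ln (1 + real (b (2*k+1)) / real (a (2*k+1)))"
    using a_pos[of "2*k+1"] by (simp only: ln_mult_pos of_nat_0_less_iff)
  then show ?thesis
    by (simp only: ln_a_odd)
qed

lemma ln_a_plus_b_even: "ln (real (a (2*k+2) + b (2*k+2))) = 2 * 4 ^ k * S k + ln (r (2*k+1))"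
proof -
  have "ln (real (a (2*k+2) + b (2*k+2))) = 2 * ln (real (a (2*k+1))) + ln (r (2*k+1))"
    using a_plus_b_Suc[of "2*k+1"] a_pos[of "2*k+1"] r_ge_1[of "2*k+1"]
    by (simp add: ln_mult ln_realpow)
  then show ?thesis
    by (simp only: ln_a_odd mult.assoc)
qed

lemma ln_a_plus_b_approx: "\<bar>ln (real (a (Suc n) + b (Suc n))) - 2 ^ n * S (n div 2)\<bar> \<le> 1"
proof (cases "even n")
  case True
  then obtain k where n: "n = 2 * k" by blast
  let ?x = "real (b (2*k+1)) / real (a (2*k+1))"
  have "Suc n = 2*k+1" "n div 2 = k" "(2::real) ^ n = 4 ^ k"
    by (simp_all add: n power_mult)
  moreover have "0 \<le> ln (1 + ?x)" "ln (1 + ?x) \<le> ?x"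
    by (simp_all add: ln_add_one_self_le_self)
  ultimately show ?thesis
    using ratio_odd_le_half[of k] by (simp only: ln_a_plus_b_odd)
next
  case False
  then obtain k where n: "n = 2 * k + 1" using oddE by blast
  have "Suc n = 2*k+2" "n div 2 = k" "(2::real) ^ n = 2 * 4 ^ k"
    by (simp_all add: n power_mult)
  then show ?thesis
    using ln_r_odd_bounds[of k] by (simp only: ln_a_plus_b_even)
qed

lemma entropy_limit: "(\<lambda>n. ln (real (a n + b n)) / (2 ^ (n + 1) - 1)) \<longlonglongrightarrow> (SUP k. S k) / 4"
  by (rule tendsto_div_two_pow[OF S_converges ln_a_plus_b_approx])

end

theorem proposition5:
  fixes a b :: "nat \<Rightarrow> nat" and r :: "nat \<Rightarrow> real"
  defines "a \<equiv> seq_a Bex5" and "b \<equiv> seq_b Bex5"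
  defines "r \<equiv> (\<lambda>m. 1 + real (b m) / real (a m) + (real (b m) / real (a m)) ^ 2)"
  shows "(a 1 = 2 \<and> b 1 = 1 \<and>
          (\<forall>n\<ge>2. a n = a (n - 1) * b (n - 1) + b (n - 1) ^ 2 \<and> b n = a (n - 1) ^ 2)) \<and>
         oscillating a b \<and>
         (\<exists>L. (\<lambda>n. ln (real (a 1)) + (\<Sum>j=1..n. 2 powr (- 2 * real j) * ln (r (2 * j - 1))))
                 \<longlonglongrightarrow> L
            \<and> entropy Bex5 = ereal (L / 4))"
proof -
  interpret F: snre_Bex5 a b
    by unfold_locales (simp_all add: a_def b_def seq_0 seq_Bex5_Suc)
  have "a n = a (n - 1) * b (n - 1) + b (n - 1) ^ 2" "b n = a (n - 1) ^ 2" if "n \<ge> 2" for n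
    using that F.a_Suc[of "n - 1"] F.b_Suc[of "n - 1"] by (simp_all add: algebra_simps power2_eq_square)
  moreover have "a 1 = 2" "b 1 = 1"
    by (simp_all add: F.a_Suc F.b_Suc F.a_0 F.b_0)
  moreover have "(\<lambda>n. ln (real (a 1)) + (\<Sum>j=1..n. 2 powr (- 2 * real j) * ln (r (2 * j - 1)))) = F.S"
    by (simp add: fun_eq_iff F.S_def F.r_def r_def)
  moreover have "entropy Bex5 = ereal ((SUP k. F.S k) / 4)"
    unfolding entropy_def a_def[symmetric] b_def[symmetric]
    using F.entropy_limit by (intro lim_imp_Limsup) simp_all
  ultimately show ?thesis
    using F.oscillating F.S_converges by auto
qed

end
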